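(* Let $\gamma>0$ and let $\mathcal{L}$ be the qubit Lindbladian with no Hamiltonian part and a single jump operator $L=\sqrt{\gamma}\,|0\rangle\langle 1|$, i.e. $\mathcal{L}(\rho)=L\rho L^\dagger-\frac12\{L^\dagger L,\rho\}$. Then $\mathcal{L}$ is not quantum programmable.
   Context: $\mathcal{L}$ generates the amplitude-damping semigroup $(e^{t\mathcal{L}})_{t\ge0}$. $\mathcal{L}$ is quantum programmable if there exist a finite-dimensional program space $\mathcal{H}_P$, a CPTP map $\mathcal{P}$ from operators on $\mathbb{C}^2\otimes\mathcal{H}_P$ to operators on $\mathbb{C}^2$, and a continuous family of density operators $(\pi_t)_{t\ge0}$ on $\mathcal{H}_P$ such that $\mathcal{P}(\rho\otimes\pi_t)=e^{t\mathcal{L}}(\rho)$ for all $t\ge0$ and all $\rho$. *)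

theory Defs
  imports Complex_Main "Jordan_Normal_Form.Matrix"
begin

text \<open>Operators on C^n are n x n complex matrices. The tensor product
C^2 (x) C^d is identified with C^(2d) via the basis ordering |i> (x) |a> = e_(i*d+a).\<close>

definition dagger :: "complex mat \<Rightarrow> complex mat" where
  "dagger A = mat (dim_col A) (dim_row A) (\<lambda>(i,j). cnj (A $$ (j,i)))"

definition mtrace :: "complex mat \<Rightarrow> complex" where
  "mtrace A = (\<Sum>i<dim_row A. A $$ (i,i))"

definition psd :: "nat \<Rightarrow> complex mat \<Rightarrow> bool" where
  "psd n A \<longleftrightarrow> A \<in> carrier_mat n n \<and>
     (\<forall>v :: nat \<Rightarrow> complex. let q = (\<Sum>i<n. \<Sum>j<n. cnj (v i) * A $$ (i,j) * v j)
        in Im q = 0 \<and> 0 \<le> Re q)"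

definition density :: "nat \<Rightarrow> complex mat \<Rightarrow> bool" where
  "density n A \<longleftrightarrow> psd n A \<and> mtrace A = 1"

definition kron :: "complex mat \<Rightarrow> complex mat \<Rightarrow> complex mat" where
  "kron A B = mat (dim_row A * dim_row B) (dim_col A * dim_col B)
     (\<lambda>(i,j). A $$ (i div dim_row B, j div dim_col B) * B $$ (i mod dim_row B, j mod dim_col B))"

text \<open>(id_k (x) Phi) for Phi mapping n x n to m x m matrices; the ancilla C^k
is the first tensor factor, so a (k n) x (k n) matrix is a k x k array of n x n blocks.\<close>
definition ampliate :: "nat \<Rightarrow> nat \<Rightarrow> nat \<Rightarrow> (complex mat \<Rightarrow> complex mat) \<Rightarrow> complex mat \<Rightarrow> complex mat" where
  "ampliate k n m \<Phi> X = mat (k*m) (k*m) (\<lambda>(i,j).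
     \<Phi> (mat n n (\<lambda>(p,q). X $$ ((i div m) * n + p, (j div m) * n + q))) $$ (i mod m, j mod m))"

definition CPTP :: "nat \<Rightarrow> nat \<Rightarrow> (complex mat \<Rightarrow> complex mat) \<Rightarrow> bool" where
  "CPTP n m \<Phi> \<longleftrightarrow>
     (\<forall>A\<in>carrier_mat n n. \<Phi> A \<in> carrier_mat m m) \<and>
     (\<forall>A\<in>carrier_mat n n. \<forall>B\<in>carrier_mat n n. \<Phi> (A + B) = \<Phi> A + \<Phi> B) \<and>
     (\<forall>c. \<forall>A\<in>carrier_mat n n. \<Phi> (c \<cdot>\<^sub>m A) = c \<cdot>\<^sub>m \<Phi> A) \<and>
     (\<forall>A\<in>carrier_mat n n. mtrace (\<Phi> A) = mtrace A) \<and>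
     (\<forall>k X. psd (k*n) X \<longrightarrow> psd (k*m) (ampliate k n m \<Phi> X))"

definition jump :: "real \<Rightarrow> complex mat" where
  "jump \<gamma> = mat 2 2 (\<lambda>(i,j). if i = 0 \<and> j = 1 then complex_of_real (sqrt \<gamma>) else 0)"

definition lindbladian :: "real \<Rightarrow> complex mat \<Rightarrow> complex mat" where
  "lindbladian \<gamma> \<rho> =
     jump \<gamma> * \<rho> * dagger (jump \<gamma>)
     - (1/2 :: complex) \<cdot>\<^sub>m (dagger (jump \<gamma>) * jump \<gamma> * \<rho> + \<rho> * (dagger (jump \<gamma>) * jump \<gamma>))"

definition amp_damp_semigroup :: "real \<Rightarrow> real \<Rightarrow> complex mat \<Rightarrow> complex mat" where
  "amp_damp_semigroup \<gamma> t \<rho> = mat 2 2 (\<lambda>(i,j).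
     \<Sum>n. (complex_of_real t ^ n / of_nat (fact n)) * (((lindbladian \<gamma>) ^^ n) \<rho> $$ (i,j)))"

definition quantum_programmable :: "(real \<Rightarrow> complex mat \<Rightarrow> complex mat) \<Rightarrow> bool" where
  "quantum_programmable T \<longleftrightarrow>
     (\<exists>(d::nat) (P :: complex mat \<Rightarrow> complex mat) (\<pi> :: real \<Rightarrow> complex mat).
        CPTP (2*d) 2 P \<and>
        (\<forall>t\<ge>0. density d (\<pi> t)) \<and>
        (\<forall>i<d. \<forall>j<d. continuous_on {0..} (\<lambda>t. \<pi> t $$ (i,j))) \<and>
        (\<forall>t\<ge>0. \<forall>\<rho>. density 2 \<rho> \<longrightarrow> P (kron \<rho> (\<pi> t)) = T t \<rho>))"

end

theory Submission
  imports Defs "Jordan_Normal_Form.Char_Poly"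
begin

text \<open>
  Suppose \<open>P (\<rho> \<otimes> \<pi>\<^sub>t) = exp (t L) \<rho>\<close> for all \<open>t \<ge> 0\<close>. The channel \<open>exp (t L)\<close> is amplitude damping
  with coherence factor \<open>s = exp (-\<gamma> t / 2)\<close>, and its Choi matrix has the null vectors \<open>|01\<rangle>\<close> and
  \<open>s |00\<rangle> - |11\<rangle>\<close>. Complete positivity of \<open>P\<close> makes \<open>\<pi>\<^sub>t \<otimes> Choi(P)\<close> positive semidefinite, and on
  suitable lifts of these two vectors its quadratic form equals that of the Choi matrix of \<open>exp (t L)\<close>,
  i.e. vanishes. So the lifts lie in its kernel, and the kernel equations together with trace
  preservation say that every row of \<open>\<pi>\<^sub>t\<close> is an eigenvector, with eigenvalue \<open>s\<close>, of the matrix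
  \<open>M x' x = \<langle>0| P (|0\<rangle>\<langle>1| \<otimes> |x'\<rangle>\<langle>x|) |1\<rangle>\<close>, which does not depend on \<open>t\<close>. But \<open>M\<close> has finitely many
  eigenvalues, while \<open>t \<mapsto> exp (-\<gamma> t / 2)\<close> is injective.
\<close>

lemma sum_lessThan_2: "(\<Sum>i<2. f i) = f 0 + f (1::nat)"
  by (simp add: numeral_2_eq_2)

lemma sum_lessThan_mult_nat:
  fixes f :: "nat \<Rightarrow> 'a::comm_monoid_add"
  shows "(\<Sum>r<a*b. f r) = (\<Sum>c<a. \<Sum>x<b. f (c*b + x))"
proof -
  have "(\<Sum>r<a*b. f r) = (\<Sum>c<a. \<Sum>r\<in>{c*b..<c*b+b}. f r)"
    by (simp add: sum.nat_group)
  also have "\<dots> = (\<Sum>c<a. \<Sum>x<b. f (c*b + x))"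
    by (simp add: sum.shift_bounds_nat_ivl[of f 0 _ b, simplified] lessThan_atLeast0 add.commute)
  finally show ?thesis .
qed

lemma mult_add_less_mult:
  fixes a p :: nat
  assumes "a < A" and "p < n"
  shows "a * n + p < A * n"
proof -
  have "(a + 1) * n \<le> A * n"
    using assms(1) by (intro mult_right_mono) auto
  then show ?thesis
    using assms(2) by simp
qed

lemma div_mod_mult_eq:
  fixes I :: nat
  shows "I div (n * m) = I div m div n"
    and "I mod (n * m) div m = I div m mod n"
    and "I mod (n * m) mod m = I mod m"
  by (simp add: mult.commute[of n m] div_mult2_eq,
      (cases "m = 0"; simp add: mult.commute[of n m] mod_mult2_eq)+)

lemma sum_if_zero_const: "(\<Sum>k\<in>A. if P then f k else 0) = (if P then sum f A else 0)"
  by simp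

lemma sum_group_by:
  fixes h :: "'b \<Rightarrow> 'a::comm_semiring_0" and c :: "'c \<Rightarrow> 'a"
  assumes "finite S" "finite T" "f ` S \<subseteq> T"
  shows "(\<Sum>x\<in>S. h (f x) * c x) = (\<Sum>y\<in>T. h y * (\<Sum>x | x \<in> S \<and> f x = y. c x))"
  using sum.group[OF assms, of "\<lambda>x. h (f x) * c x"]
  by (simp add: sum_distrib_left)

lemma linear_coeff_zero_if_nonneg:
  fixes b c :: real
  assumes "\<And>e. 0 \<le> e * b + e\<^sup>2 * c"
  shows "b = 0"
proof (rule ccontr)
  assume "b \<noteq> 0"
  define u where "u = 1 / (2 * (\<bar>c\<bar> + 1))"
  have u: "u > 0" "u * \<bar>c\<bar> < 1"
    by (simp_all add: u_def)
  have "(- b * u) * b + (- b * u)\<^sup>2 * c \<le> (- b * u) * b + (- b * u)\<^sup>2 * \<bar>c\<bar>"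
    by (simp add: mult_left_mono)
  also have "\<dots> = b\<^sup>2 * u * (u * \<bar>c\<bar> - 1)"
    by (simp add: power2_eq_square algebra_simps)
  also have "\<dots> < 0"
    using \<open>b \<noteq> 0\<close> u by (simp add: mult_pos_neg)
  finally show False
    using assms[of "- b * u"] by simp
qed

definition mat_unit :: "nat \<Rightarrow> nat \<Rightarrow> nat \<Rightarrow> 'a::{zero,one} mat" where
  "mat_unit n p q = mat n n (\<lambda>(i,j). if i = p \<and> j = q then 1 else 0)"

lemma mat_unit_carrier [simp]: "mat_unit n p q \<in> carrier_mat n n"
  and dim_row_mat_unit [simp]: "dim_row (mat_unit n p q) = n"
  and dim_col_mat_unit [simp]: "dim_col (mat_unit n p q) = n"
  by (simp_all add: mat_unit_def)

lemma index_mat_unit [simp]: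
  "i < n \<Longrightarrow> j < n \<Longrightarrow> mat_unit n p q $$ (i,j) = (if i = p \<and> j = q then 1 else 0)"
  by (simp add: mat_unit_def)

definition linear_mat_map :: "nat \<Rightarrow> nat \<Rightarrow> (complex mat \<Rightarrow> complex mat) \<Rightarrow> bool" where
  "linear_mat_map n m \<Phi> \<longleftrightarrow>
     (\<forall>A\<in>carrier_mat n n. \<Phi> A \<in> carrier_mat m m) \<and>
     (\<forall>A\<in>carrier_mat n n. \<forall>B\<in>carrier_mat n n. \<Phi> (A + B) = \<Phi> A + \<Phi> B) \<and>
     (\<forall>c. \<forall>A\<in>carrier_mat n n. \<Phi> (c \<cdot>\<^sub>m A) = c \<cdot>\<^sub>m \<Phi> A)"

lemma linear_mat_mapD:
  assumes "linear_mat_map n m \<Phi>" and "A \<in> carrier_mat n n"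
  shows "\<Phi> A \<in> carrier_mat m m"
    and "B \<in> carrier_mat n n \<Longrightarrow> \<Phi> (A + B) = \<Phi> A + \<Phi> B"
    and "\<Phi> (c \<cdot>\<^sub>m A) = c \<cdot>\<^sub>m \<Phi> A"
  using assms unfolding linear_mat_map_def by blast+

lemma CPTP_linear_mat_map: "CPTP n m \<Phi> \<Longrightarrow> linear_mat_map n m \<Phi>"
  unfolding CPTP_def linear_mat_map_def by blast

lemma linear_mat_map_index_sum:
  assumes \<Phi>: "linear_mat_map n m \<Phi>" and i: "i < m" and j: "j < m"
    and S: "finite S" "S \<subseteq> {..<n} \<times> {..<n}"
  shows "\<Phi> (mat n n (\<lambda>pq. if pq \<in> S then A $$ pq else 0)) $$ (i,j)
       = (\<Sum>(p,q)\<in>S. A $$ (p,q) * \<Phi> (mat_unit n p q) $$ (i,j))"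
  using S
proof (induction S rule: finite_induct)
  case empty
  have "\<Phi> (0 \<cdot>\<^sub>m 0\<^sub>m n n) = 0 \<cdot>\<^sub>m \<Phi> (0\<^sub>m n n)"
    by (rule linear_mat_mapD(3)[OF \<Phi>]) simp
  moreover have "mat n n (\<lambda>pq. if pq \<in> {} then A $$ pq else 0) = 0 \<cdot>\<^sub>m 0\<^sub>m n n"
    by auto
  ultimately show ?case
    using linear_mat_mapD(1)[OF \<Phi>, of "0\<^sub>m n n"] i j by (simp del: smult_zero_mat)
next
  case (insert pq S)
  obtain p q where pq: "pq = (p,q)" by force
  let ?R = "\<lambda>S. mat n n (\<lambda>pq. if pq \<in> S then A $$ pq else 0)"
  have "?R (insert pq S) = ?R S + A $$ (p,q) \<cdot>\<^sub>m mat_unit n p q"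
    using insert.hyps(2) by (auto simp: pq)
  then have "\<Phi> (?R (insert pq S)) = \<Phi> (?R S) + A $$ (p,q) \<cdot>\<^sub>m \<Phi> (mat_unit n p q)"
    using linear_mat_mapD[OF \<Phi>] by simp
  moreover have "\<Phi> (?R S) \<in> carrier_mat m m" "\<Phi> (mat_unit n p q) \<in> carrier_mat m m"
    using linear_mat_mapD(1)[OF \<Phi>] by simp_all
  ultimately show ?case
    using insert i j by (simp add: pq)
qed

lemma linear_mat_map_index:
  assumes "linear_mat_map n m \<Phi>" and "A \<in> carrier_mat n n" and "i < m" and "j < m"
  shows "\<Phi> A $$ (i,j) = (\<Sum>p<n. \<Sum>q<n. A $$ (p,q) * \<Phi> (mat_unit n p q) $$ (i,j))"
proof -
  have "A = mat n n (\<lambda>pq. if pq \<in> {..<n} \<times> {..<n} then A $$ pq else 0)"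
    using assms(2) by auto
  then show ?thesis
    using linear_mat_map_index_sum[OF assms(1,3,4), of "{..<n} \<times> {..<n}" A]
    by (simp add: sum.cartesian_product)
qed

lemma mtrace_CPTP_mat_unit:
  assumes "CPTP n m P" and "p < n"
  shows "mtrace (P (mat_unit n p q)) = of_bool (p = q)"
proof -
  have "mtrace (P (mat_unit n p q)) = mtrace (mat_unit n p q :: complex mat)"
    using assms(1) unfolding CPTP_def by simp
  also have "\<dots> = (\<Sum>i<n. if i = p then of_bool (p = q) else 0)"
    unfolding mtrace_def by (intro sum.cong) auto
  finally show ?thesis
    using assms(2) by simp
qed

lemma index_kron:
  "I < dim_row A * dim_row B \<Longrightarrow> J < dim_col A * dim_col B \<Longrightarrow>
   kron A B $$ (I,J) = A $$ (I div dim_row B, J div dim_col B) * B $$ (I mod dim_row B, J mod dim_col B)"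
  by (simp add: kron_def)

lemma linear_mat_map_kron_right:
  assumes P: "linear_mat_map (n * d) m P" and \<pi>: "\<pi> \<in> carrier_mat d d"
  shows "linear_mat_map n m (\<lambda>\<rho>. P (kron \<rho> \<pi>))"
proof -
  have kron_carrier: "kron A \<pi> \<in> carrier_mat (n * d) (n * d)" if "A \<in> carrier_mat n n" for A
    using that \<pi> by (simp add: kron_def)
  have "kron (A + B) \<pi> = kron A \<pi> + kron B \<pi>" "kron (c \<cdot>\<^sub>m A) \<pi> = c \<cdot>\<^sub>m kron A \<pi>"
    if "A \<in> carrier_mat n n" "B \<in> carrier_mat n n" for A B c
    using that \<pi> by (auto simp: kron_def algebra_simps less_mult_imp_div_less)
  then show ?thesis
    using linear_mat_mapD[OF P] kron_carrier unfolding linear_mat_map_def by simp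
qed

lemma kron_mat_unit_image:
  assumes P: "linear_mat_map (n * d) m P" and \<pi>: "\<pi> \<in> carrier_mat d d"
    and "a < n" "b < n" "i < m" "j < m"
  shows "P (kron (mat_unit n a b) \<pi>) $$ (i,j)
       = (\<Sum>x<d. \<Sum>x'<d. \<pi> $$ (x,x') * P (mat_unit (n * d) (a * d + x) (b * d + x')) $$ (i,j))"
proof -
  have "kron (mat_unit n a b) \<pi> \<in> carrier_mat (n * d) (n * d)"
    using \<pi> by (simp add: kron_def)
  then have "P (kron (mat_unit n a b) \<pi>) $$ (i,j)
      = (\<Sum>a'<n. \<Sum>x<d. \<Sum>b'<n. \<Sum>x'<d. kron (mat_unit n a b) \<pi> $$ (a' * d + x, b' * d + x')
           * P (mat_unit (n * d) (a' * d + x) (b' * d + x')) $$ (i,j))"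
    using linear_mat_map_index[OF P _ assms(5,6)] by (simp add: sum_lessThan_mult_nat)
  also have "\<dots> = (\<Sum>a'<n. \<Sum>x<d. \<Sum>b'<n. \<Sum>x'<d. if a' = a then if b' = b then \<pi> $$ (x,x')
           * P (mat_unit (n * d) (a' * d + x) (b' * d + x')) $$ (i,j) else 0 else 0)"
    using \<pi> mult_add_less_mult[of _ n _ d] by (intro sum.cong refl) (simp add: index_kron)
  also have "\<dots> = (\<Sum>x<d. \<Sum>x'<d. \<pi> $$ (x,x') * P (mat_unit (n * d) (a * d + x) (b * d + x')) $$ (i,j))"
    using assms(3,4) by (simp add: sum_if_zero_const)
  finally show ?thesis .
qed

section \<open>Positive semidefinite matrices\<close>

definition quad_form :: "nat \<Rightarrow> complex mat \<Rightarrow> (nat \<Rightarrow> complex) \<Rightarrow> complex" where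
  "quad_form N Q v = (\<Sum>i<N. \<Sum>j<N. cnj (v i) * Q $$ (i,j) * v j)"

lemma psd_carrier: "psd n A \<Longrightarrow> A \<in> carrier_mat n n"
  by (simp add: psd_def)

lemma psd_quad_form: "psd N Q \<Longrightarrow> Im (quad_form N Q v) = 0 \<and> 0 \<le> Re (quad_form N Q v)"
  unfolding psd_def quad_form_def Let_def by blast

lemma quad_form_add_unit:
  assumes "I < N"
  shows "quad_form N Q (\<lambda>j. w j + (if j = I then t else 0)) = quad_form N Q w
     + t * (\<Sum>i<N. cnj (w i) * Q $$ (i,I)) + cnj t * (\<Sum>j<N. Q $$ (I,j) * w j) + cnj t * t * Q $$ (I,I)"
proof -
  have if_zero_distrib: "x * (if P then y else 0) = (if P then x * y else 0)"
    "(if P then y else 0) * x = (if P then y * x else 0)"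
    "cnj (if P then y else 0) = (if P then cnj y else 0)"
    for P and x y :: complex
    by simp_all
  show ?thesis
    using assms
    by (simp add: quad_form_def if_zero_distrib sum_if_zero_const distrib_left distrib_right sum.distrib
        sum_distrib_left mult_ac add_ac)
qed

lemma psd_quad_form_eq_0_imp_kernel:
  assumes psd: "psd N Q" and zero: "quad_form N Q w = 0" and I: "I < N"
  shows "(\<Sum>j<N. Q $$ (I,j) * w j) = 0"
proof -
  txt \<open>The form at \<open>w + t e\<^sub>I\<close> is a nonnegative polynomial in \<open>t\<close> without constant term, so its linear
    part vanishes for all directions of \<open>t\<close>.\<close>
  define a where "a = (\<Sum>i<N. cnj (w i) * Q $$ (i,I))"
  define b where "b = (\<Sum>j<N. Q $$ (I,j) * w j)"
  define c where "c = Q $$ (I,I)"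
  have nonneg: "Im (t * a + cnj t * b + cnj t * t * c) = 0 \<and> 0 \<le> Re (t * a + cnj t * b + cnj t * t * c)" for t
    using psd_quad_form[OF psd, of "\<lambda>j. w j + (if j = I then t else 0)"]
    by (simp add: quad_form_add_unit[OF I] zero a_def b_def c_def)
  have "Im c = 0"
    using nonneg[of 1] nonneg[of "-1"] by simp
  then have "Im a + Im b = 0" "Re a - Re b = 0"
    using nonneg[of 1] nonneg[of "\<i>"] by simp_all
  moreover have "Re a + Re b = 0"
    by (rule linear_coeff_zero_if_nonneg[where c = "Re c"])
      (use nonneg[of "of_real e" for e] in \<open>simp add: algebra_simps power2_eq_square\<close>)
  moreover have "Im b - Im a = 0"
    by (rule linear_coeff_zero_if_nonneg[where c = "Re c"])
      (use nonneg[of "\<i> * of_real e" for e] in \<open>simp add: algebra_simps power2_eq_square\<close>)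
  ultimately have "Re b = 0" "Im b = 0"
    by linarith+
  then show ?thesis
    by (simp add: b_def[symmetric] complex_eq_iff)
qed

lemma psd_reindex:
  assumes A: "psd m A" and f: "\<And>I. I < N \<Longrightarrow> f I < m"
  shows "psd N (mat N N (\<lambda>(I,J). if g I \<and> g J then A $$ (f I, f J) else 0))"
    (is "psd N ?B")
proof -
  have "quad_form N ?B v = quad_form m A (\<lambda>y. \<Sum>x | x < N \<and> f x = y. if g x then v x else 0)" for v
  proof -
    define w where "w x = (if g x then v x else 0)" for x
    define u where "u y = (\<Sum>x | x < N \<and> f x = y. w x)" for y
    have group: "(\<Sum>x<N. h (f x) * c x) = (\<Sum>y<m. h y * (\<Sum>x | x < N \<and> f x = y. c x))"
      for h c :: "nat \<Rightarrow> complex"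
      using sum_group_by[of "{..<N}" "{..<m}" f h c] f by auto
    have "quad_form N ?B v = (\<Sum>x<N. (\<Sum>x'<N. A $$ (f x, f x') * w x') * cnj (w x))"
      unfolding quad_form_def w_def by (auto simp: sum_distrib_left mult_ac intro!: sum.cong)
    also have "\<dots> = (\<Sum>x<N. (\<Sum>y'<m. A $$ (f x, y') * u y') * cnj (w x))"
      unfolding u_def using group[of "\<lambda>y'. A $$ (f x, y')" w for x] by simp
    also have "\<dots> = (\<Sum>y<m. (\<Sum>y'<m. A $$ (y, y') * u y') * cnj (u y))"
      unfolding u_def using group[of "\<lambda>y. \<Sum>y'<m. A $$ (y, y') * u y'" "\<lambda>x. cnj (w x)"]
      by (simp add: u_def)
    also have "\<dots> = quad_form m A u"
      unfolding quad_form_def by (simp add: sum_distrib_left sum_distrib_right mult_ac)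
    finally show ?thesis
      unfolding u_def w_def .
  qed
  then show ?thesis
    using psd_quad_form[OF A] unfolding psd_def quad_form_def[symmetric] Let_def by simp
qed

definition outer_mat :: "nat \<Rightarrow> (nat \<Rightarrow> complex) \<Rightarrow> complex mat" where
  "outer_mat n v = mat n n (\<lambda>(i,j). v i * cnj (v j))"

lemma psd_outer_mat: "psd n (outer_mat n v)"
proof -
  have "Im (quad_form n (outer_mat n v) w) = 0 \<and> 0 \<le> Re (quad_form n (outer_mat n v) w)" for w
  proof -
    define z where "z = (\<Sum>i<n. v i * cnj (w i))"
    have "quad_form n (outer_mat n v) w = cnj z * z"
      unfolding quad_form_def outer_mat_def z_def
      by (simp add: sum_distrib_left sum_distrib_right mult_ac) (rule sum.swap)
    also have "\<dots> = of_real ((cmod z)\<^sup>2)"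
      by (metis complex_norm_square mult.commute)
    finally show ?thesis
      by simp
  qed
  then show ?thesis
    unfolding psd_def quad_form_def[symmetric] Let_def outer_mat_def by simp
qed

lemma density_outer_mat:
  assumes "(\<Sum>i<n. (cmod (v i))\<^sup>2) = 1"
  shows "density n (outer_mat n v)"
proof -
  have "mtrace (outer_mat n v) = (\<Sum>i<n. of_real ((cmod (v i))\<^sup>2))"
    unfolding mtrace_def outer_mat_def by (simp add: complex_norm_square del: of_real_power)
  also have "\<dots> = of_real (\<Sum>i<n. (cmod (v i))\<^sup>2)"
    by (rule of_real_sum[symmetric])
  finally show ?thesis
    using assms psd_outer_mat unfolding density_def by simp
qed

lemma density_carrier: "density n A \<Longrightarrow> A \<in> carrier_mat n n"
  by (simp add: density_def psd_carrier)

lemma linear_mat_map_eq_on_qubit_densities: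
  assumes \<Phi>: "linear_mat_map 2 m \<Phi>" and \<Psi>: "linear_mat_map 2 m \<Psi>"
    and eq: "\<And>\<rho>. density 2 \<rho> \<Longrightarrow> \<Phi> \<rho> = \<Psi> \<rho>" and A: "A \<in> carrier_mat 2 2"
  shows "\<Phi> A = \<Psi> A"
proof (rule eq_matI)
  fix i j assume "i < dim_row (\<Psi> A)" "j < dim_col (\<Psi> A)"
  then have ij: "i < m" "j < m"
    using linear_mat_mapD(1)[OF \<Psi> A] by auto
  define c where "c p q = \<Phi> (mat_unit 2 p q) $$ (i,j) - \<Psi> (mat_unit 2 p q) $$ (i,j)" for p q
  have diff: "\<Phi> \<rho> $$ (i,j) - \<Psi> \<rho> $$ (i,j) = (\<Sum>p<2. \<Sum>q<2. \<rho> $$ (p,q) * c p q)"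
    if "\<rho> \<in> carrier_mat 2 2" for \<rho>
    using linear_mat_map_index[OF \<Phi> that ij] linear_mat_map_index[OF \<Psi> that ij]
    by (simp add: c_def algebra_simps sum_subtractf)
  have zero: "(\<Sum>p<2. \<Sum>q<2. v p * cnj (v q) * c p q) = 0" if "(\<Sum>k<2. (cmod (v k))\<^sup>2) = 1" for v
    using diff[of "outer_mat 2 v"] eq[OF density_outer_mat[OF that]] by (simp add: outer_mat_def)
  txt \<open>The pure states \<open>|0\<rangle>\<close>, \<open>|1\<rangle>\<close>, \<open>(|0\<rangle> + |1\<rangle>) / \<surd>2\<close> and \<open>(|0\<rangle> + \<i>|1\<rangle>) / \<surd>2\<close> span all \<open>2 \<times> 2\<close> matrices.\<close>
  define r where "r = complex_of_real (1 / sqrt 2)"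
  have r: "r \<noteq> 0" "cnj r = r" "r * r = 1 / 2" "(cmod r)\<^sup>2 = 1 / 2"
    by (simp_all add: r_def norm_divide power_divide flip: of_real_mult)
  have diag: "c 0 0 = 0" "c 1 1 = 0"
    using zero[of "\<lambda>k. if k = 0 then 1 else 0"] zero[of "\<lambda>k. if k = 1 then 1 else 0"]
    by (simp_all add: sum_lessThan_2)
  have "c 0 1 + c 1 0 = 0" "c 1 0 = c 0 1"
    using zero[of "\<lambda>k. r"] zero[of "\<lambda>k. if k = 0 then r else \<i> * r"] r diag
    by (simp_all add: sum_lessThan_2 norm_mult field_simps)
  then have "c p q = 0" if "p < 2" "q < 2" for p q
    using that diag by (auto simp: less_2_cases_iff)
  then show "\<Phi> A $$ (i,j) = \<Psi> A $$ (i,j)"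
    using diff[OF A] by simp
qed (use linear_mat_mapD(1)[OF \<Phi> A] linear_mat_mapD(1)[OF \<Psi> A] in auto)

section \<open>Choi matrices\<close>

definition choi :: "nat \<Rightarrow> nat \<Rightarrow> (complex mat \<Rightarrow> complex mat) \<Rightarrow> complex mat" where
  "choi n m \<Phi> = mat (n*m) (n*m) (\<lambda>(I,J). \<Phi> (mat_unit n (I div m) (J div m)) $$ (I mod m, J mod m))"

lemma dim_choi [simp]: "dim_row (choi n m \<Phi>) = n * m" "dim_col (choi n m \<Phi>) = n * m"
  by (simp_all add: choi_def)

lemma index_choi:
  "I < n * m \<Longrightarrow> J < n * m \<Longrightarrow>
   choi n m \<Phi> $$ (I,J) = \<Phi> (mat_unit n (I div m) (J div m)) $$ (I mod m, J mod m)"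
  by (simp add: choi_def)

text \<open>\<open>kron_omega n \<pi> = \<pi> \<otimes> |\<Omega>\<rangle>\<langle>\<Omega>|\<close> with \<open>\<Omega> = \<Sum>\<^sub>r |r\<rangle> \<otimes> |r\<rangle> \<in> \<complex>\<^sup>n \<otimes> \<complex>\<^sup>n\<close>.\<close>

definition kron_omega :: "nat \<Rightarrow> complex mat \<Rightarrow> complex mat" where
  "kron_omega n \<pi> = mat (dim_row \<pi> * n * n) (dim_row \<pi> * n * n) (\<lambda>(I,J).
     if I mod n = I div n mod n \<and> J mod n = J div n mod n then \<pi> $$ (I div n div n, J div n div n) else 0)"

lemma psd_kron_omega:
  assumes "psd d \<pi>"
  shows "psd (d * n * n) (kron_omega n \<pi>)"
proof -
  have "dim_row \<pi> = d"
    using psd_carrier[OF assms] by simp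
  then show ?thesis
    unfolding kron_omega_def by (simp only:) (rule psd_reindex[OF assms], simp add: less_mult_imp_div_less)
qed

lemma ampliate_kron_omega:
  assumes \<Phi>: "linear_mat_map n m \<Phi>" and \<pi>: "\<pi> \<in> carrier_mat d d"
  shows "ampliate (d * n) n m \<Phi> (kron_omega n \<pi>) = kron \<pi> (choi n m \<Phi>)"
proof (rule eq_matI)
  fix I J assume "I < dim_row (kron \<pi> (choi n m \<Phi>))" "J < dim_col (kron \<pi> (choi n m \<Phi>))"
  then have IJ: "I < d * n * m" "J < d * n * m"
    using \<pi> by (simp_all add: kron_def mult.assoc)
  then have blocks: "I div m < d * n" "J div m < d * n"
    by (simp_all add: less_mult_imp_div_less)
  let ?c = "\<pi> $$ (I div m div n, J div m div n)"
  let ?E = "mat_unit n (I div m mod n) (J div m mod n) :: complex mat"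
  have "mat n n (\<lambda>(p,q). kron_omega n \<pi> $$ (I div m * n + p, J div m * n + q)) = ?c \<cdot>\<^sub>m ?E"
    using \<pi> mult_add_less_mult[OF blocks(1)] mult_add_less_mult[OF blocks(2)]
    by (auto simp: kron_omega_def)
  then have "ampliate (d * n) n m \<Phi> (kron_omega n \<pi>) $$ (I,J) = \<Phi> (?c \<cdot>\<^sub>m ?E) $$ (I mod m, J mod m)"
    using IJ by (simp add: ampliate_def)
  also have "\<dots> = ?c * \<Phi> ?E $$ (I mod m, J mod m)"
    using linear_mat_mapD[OF \<Phi>, of ?E] IJ by (cases "m = 0") simp_all
  also have "\<dots> = kron \<pi> (choi n m \<Phi>) $$ (I,J)"
  proof -
    have "0 < n * m"
      using IJ by (cases "n * m = 0") (simp_all add: mult.assoc)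
    then show ?thesis
      using IJ \<pi> by (simp add: index_kron index_choi div_mod_mult_eq mult.assoc)
  qed
  finally show "ampliate (d * n) n m \<Phi> (kron_omega n \<pi>) $$ (I,J) = kron \<pi> (choi n m \<Phi>) $$ (I,J)" .
qed (use \<pi> in \<open>simp_all add: ampliate_def kron_def\<close>)

lemma psd_kron_choi:
  assumes \<Phi>: "CPTP n m \<Phi>" and \<pi>: "psd d \<pi>"
  shows "psd (d * (n * m)) (kron \<pi> (choi n m \<Phi>))"
proof -
  have "psd ((d * n) * m) (ampliate (d * n) n m \<Phi> (kron_omega n \<pi>))"
    using \<Phi> psd_kron_omega[OF \<pi>] unfolding CPTP_def by blast
  then show ?thesis
    by (simp add: ampliate_kron_omega[OF CPTP_linear_mat_map[OF \<Phi>] psd_carrier[OF \<pi>]] mult.assoc)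
qed

lemma index_kron_choi:
  assumes "\<pi> \<in> carrier_mat d d" and "y < d" "y' < d" "r < n" "r' < n" "i < m" "j < m"
  shows "kron \<pi> (choi n m P) $$ (y * (n * m) + (r * m + i), y' * (n * m) + (r' * m + j))
       = \<pi> $$ (y,y') * P (mat_unit n r r') $$ (i,j)"
proof -
  have "r * m + i < n * m" "r' * m + j < n * m"
    using assms(4-7) by (simp_all add: mult_add_less_mult)
  moreover have "y * (n * m) + (r * m + i) < d * (n * m)" "y' * (n * m) + (r' * m + j) < d * (n * m)"
    using calculation assms(2,3) by (simp_all add: mult_add_less_mult)
  ultimately show ?thesis
    using assms by (simp add: index_kron index_choi)
qed

section \<open>The amplitude-damping semigroup\<close>

lemma lindbladian_formula:
  assumes "\<gamma> \<ge> 0" and "\<rho> \<in> carrier_mat 2 2"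
  shows "lindbladian \<gamma> \<rho> = mat 2 2 (\<lambda>(i,j).
      if i = 0 \<and> j = 0 then of_real \<gamma> * \<rho> $$ (1,1)
      else if i = 1 \<and> j = 1 then - of_real \<gamma> * \<rho> $$ (1,1)
      else - (of_real \<gamma> / 2) * \<rho> $$ (i,j))"
proof -
  have "complex_of_real (sqrt \<gamma>) * complex_of_real (sqrt \<gamma>) = of_real \<gamma>"
    using assms(1) by (simp flip: of_real_mult)
  then show ?thesis
    using assms(2)
    by (auto simp: lindbladian_def jump_def dagger_def scalar_prod_def atLeast0LessThan sum_lessThan_2 less_2_cases_iff
       )
qed

lemma lindbladian_funpow:
  assumes "\<gamma> \<ge> 0" and "\<rho> \<in> carrier_mat 2 2"
  shows "(lindbladian \<gamma> ^^ n) \<rho> = mat 2 2 (\<lambda>(i,j).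
      if i = 0 \<and> j = 0 then of_bool (n = 0) * (\<rho> $$ (0,0) + \<rho> $$ (1,1)) - (- of_real \<gamma>) ^ n * \<rho> $$ (1,1)
      else if i = 1 \<and> j = 1 then (- of_real \<gamma>) ^ n * \<rho> $$ (1,1)
      else (- of_real \<gamma> / 2) ^ n * \<rho> $$ (i,j))"
proof (induction n)
  case 0
  show ?case
    using assms(2) by (auto simp: less_2_cases_iff intro!: eq_matI)
next
  case (Suc n)
  then show ?case
    by (auto simp: lindbladian_formula[OF assms(1)] less_2_cases_iff algebra_simps intro!: eq_matI)
qed

lemma sums_exp_scaled:
  "(\<lambda>n. (complex_of_real t ^ n / of_nat (fact n)) * (c * x ^ n)) sums (c * exp (of_real t * x))"
proof -
  have "(\<lambda>n. c * ((of_real t * x) ^ n /\<^sub>R fact n)) sums (c * exp (of_real t * x))"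
    by (intro sums_mult exp_converges)
  then show ?thesis
    by (simp add: scaleR_conv_of_real field_simps)
qed

text \<open>The channel with Kraus operators \<open>|0\<rangle>\<langle>0| + s |1\<rangle>\<langle>1|\<close> and \<open>\<surd>(1 - s\<^sup>2) |0\<rangle>\<langle>1|\<close>.\<close>

definition amp_damp_channel :: "real \<Rightarrow> complex mat \<Rightarrow> complex mat" where
  "amp_damp_channel s \<rho> = mat 2 2 (\<lambda>(i,j).
     if i = 0 \<and> j = 0 then \<rho> $$ (0,0) + (1 - of_real s ^ 2) * \<rho> $$ (1,1)
     else if i = 1 \<and> j = 1 then of_real s ^ 2 * \<rho> $$ (1,1)
     else of_real s * \<rho> $$ (i,j))"

lemma linear_amp_damp_channel: "linear_mat_map 2 2 (amp_damp_channel s)"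
  unfolding linear_mat_map_def amp_damp_channel_def
  by (auto simp: algebra_simps less_2_cases_iff intro!: eq_matI)

lemma amp_damp_semigroup_eq_channel:
  assumes "\<gamma> \<ge> 0" and "\<rho> \<in> carrier_mat 2 2"
  shows "amp_damp_semigroup \<gamma> t \<rho> = amp_damp_channel (exp (- \<gamma> * t / 2)) \<rho>"
proof -
  define s where "s = exp (- \<gamma> * t / 2)"
  let ?c = "\<lambda>n. complex_of_real t ^ n / of_nat (fact n)"
  have "s\<^sup>2 = exp (- \<gamma> * t)"
    by (simp add: s_def power2_eq_square flip: exp_add)
  then have "of_real s ^ 2 = complex_of_real (exp (- \<gamma> * t))"
    by (simp flip: of_real_power)
  then have decay: "exp (of_real t * (- of_real \<gamma>)) = complex_of_real s ^ 2"
    by (simp add: mult.commute flip: exp_of_real)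
  have decay_half: "exp (of_real t * (- of_real \<gamma> / 2)) = complex_of_real s"
    by (simp add: s_def mult.commute flip: exp_of_real)
  have "?c n * (of_bool (n = 0) * (\<rho> $$ (0,0) + \<rho> $$ (1,1))) = (if n = 0 then \<rho> $$ (0,0) + \<rho> $$ (1,1) else 0)" for n
    by simp
  then have "(\<lambda>n. ?c n * (of_bool (n = 0) * (\<rho> $$ (0,0) + \<rho> $$ (1,1)))) sums (\<rho> $$ (0,0) + \<rho> $$ (1,1))"
    by (simp only:) (rule sums_single)
  then have "(\<lambda>n. ?c n * (of_bool (n = 0) * (\<rho> $$ (0,0) + \<rho> $$ (1,1))) - ?c n * (\<rho> $$ (1,1) * (- of_real \<gamma>) ^ n))
      sums (\<rho> $$ (0,0) + \<rho> $$ (1,1) - \<rho> $$ (1,1) * exp (of_real t * (- of_real \<gamma>)))"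
    by (rule sums_diff[OF _ sums_exp_scaled])
  then have "(\<lambda>n. ?c n * (of_bool (n = 0) * (\<rho> $$ (0,0) + \<rho> $$ (1,1)) - (- of_real \<gamma>) ^ n * \<rho> $$ (1,1)))
      sums (\<rho> $$ (0,0) + (1 - of_real s ^ 2) * \<rho> $$ (1,1))"
    unfolding decay by (simp add: algebra_simps)
  moreover have "(\<lambda>n. ?c n * ((- of_real \<gamma>) ^ n * \<rho> $$ (1,1))) sums (of_real s ^ 2 * \<rho> $$ (1,1))"
    using sums_exp_scaled[of t "\<rho> $$ (1,1)" "- of_real \<gamma>"] unfolding decay by (simp add: mult_ac)
  moreover have "(\<lambda>n. ?c n * ((- of_real \<gamma> / 2) ^ n * \<rho> $$ (i,j))) sums (of_real s * \<rho> $$ (i,j))" for i j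
    using sums_exp_scaled[of t "\<rho> $$ (i,j)" "- of_real \<gamma> / 2"] unfolding decay_half by (simp add: mult_ac)
  ultimately show ?thesis
    unfolding amp_damp_semigroup_def amp_damp_channel_def lindbladian_funpow[OF assms] s_def[symmetric]
    by (auto simp: less_2_cases_iff intro!: eq_matI sums_unique[symmetric])
qed

text \<open>The vector \<open>\<Sum>\<^sub>a\<^sub>,\<^sub>x\<^sub>,\<^sub>i h a i |x\<rangle> \<otimes> |a d + x\<rangle> \<otimes> |i\<rangle>\<close> of \<open>\<complex>\<^sup>d \<otimes> \<complex>\<^sup>2\<^sup>d \<otimes> \<complex>\<^sup>2\<close>, which lifts the vector \<open>h\<close> of
  \<open>\<complex>\<^sup>2 \<otimes> \<complex>\<^sup>2\<close> to the index space of \<open>kron \<pi> (choi (2 * d) 2 P)\<close>.\<close>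

definition entangle_vec :: "nat \<Rightarrow> (nat \<Rightarrow> nat \<Rightarrow> complex) \<Rightarrow> nat \<Rightarrow> complex" where
  "entangle_vec d h J =
     (let y = J div (2 * d * 2); r = J mod (2 * d * 2) div 2; i = J mod (2 * d * 2) mod 2
      in if y = r mod d then h (r div d) i else 0)"

lemma entangle_vec_index:
  assumes "x < d" "b < 2" "j < 2"
  shows "entangle_vec d h (y * (2 * d * 2) + ((b * d + x) * 2 + j)) = (if y = x then h b j else 0)"
proof -
  have "(b * d + x) * 2 + j < 2 * d * 2"
    using assms by (intro mult_add_less_mult) simp_all
  moreover have "2 * d * 2 \<noteq> 0" "d \<noteq> 0"
    using assms by simp_all
  ultimately show ?thesis
    using assms by (simp only: entangle_vec_def Let_def div_mult_self3 mod_mult_self3 div_less mod_less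
        add_0_right zero_neq_numeral) simp
qed

lemma kron_choi_entangle_vec_row:
  assumes \<pi>: "\<pi> \<in> carrier_mat d d" and "y < d" "r < 2 * d" "i < 2"
  shows "(\<Sum>J<d * (2 * d * 2). kron \<pi> (choi (2 * d) 2 P) $$ (y * (2 * d * 2) + (r * 2 + i), J) * entangle_vec d h J)
       = (\<Sum>b<2. \<Sum>j<2. (\<Sum>x<d. \<pi> $$ (y,x) * P (mat_unit (2 * d) r (b * d + x)) $$ (i,j)) * h b j)"
proof -
  have "(\<Sum>J<d * (2 * d * 2). kron \<pi> (choi (2 * d) 2 P) $$ (y * (2 * d * 2) + (r * 2 + i), J) * entangle_vec d h J)
      = (\<Sum>y'<d. \<Sum>b<2. \<Sum>x<d. \<Sum>j<2. if y' = x then \<pi> $$ (y,x) * P (mat_unit (2 * d) r (b * d + x)) $$ (i,j) * h b j else 0)"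
    unfolding sum_lessThan_mult_nat[of _ d] sum_lessThan_mult_nat[of _ "2 * d"] sum_lessThan_mult_nat[of _ 2 d]
  proof (intro sum.cong refl)
    fix y' b x j :: nat assume "y' \<in> {..<d}" "b \<in> {..<2}" "x \<in> {..<d}" "j \<in> {..<2}"
    then have y': "y' < d" and r': "b * d + x < 2 * d" and xbj: "x < d" "b < 2" "j < 2"
      by (simp_all add: mult_add_less_mult)
    then show "kron \<pi> (choi (2 * d) 2 P) $$ (y * (2 * d * 2) + (r * 2 + i), y' * (2 * d * 2) + ((b * d + x) * 2 + j))
        * entangle_vec d h (y' * (2 * d * 2) + ((b * d + x) * 2 + j))
      = (if y' = x then \<pi> $$ (y,x) * P (mat_unit (2 * d) r (b * d + x)) $$ (i,j) * h b j else 0)"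
      by (simp only: index_kron_choi[OF \<pi> \<open>y < d\<close> y' \<open>r < 2 * d\<close> r' \<open>i < 2\<close> \<open>j < 2\<close>]
          entangle_vec_index[OF xbj]) simp
  qed
  also have "\<dots> = (\<Sum>b<2. \<Sum>j<2. (\<Sum>x<d. \<pi> $$ (y,x) * P (mat_unit (2 * d) r (b * d + x)) $$ (i,j)) * h b j)"
    by (subst sum.swap) (simp add: sum_distrib_right sum.swap[of _ "{..<d}" "{..<2}"])
  finally show ?thesis .
qed

lemma quad_form_kron_choi_entangle_vec:
  assumes P: "linear_mat_map (2 * d) 2 P" and \<pi>: "\<pi> \<in> carrier_mat d d"
  shows "quad_form (d * (2 * d * 2)) (kron \<pi> (choi (2 * d) 2 P)) (entangle_vec d h)
       = (\<Sum>a<2. \<Sum>i<2. cnj (h a i) * (\<Sum>b<2. \<Sum>j<2. P (kron (mat_unit 2 a b) \<pi>) $$ (i,j) * h b j))"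
proof -
  let ?N = "d * (2 * d * 2)" and ?Q = "kron \<pi> (choi (2 * d) 2 P)"
  let ?K = "\<lambda>a x b x' i j. \<pi> $$ (x,x') * P (mat_unit (2 * d) (a * d + x) (b * d + x')) $$ (i,j)"
  define R where "R I = (\<Sum>J<?N. ?Q $$ (I,J) * entangle_vec d h J)" for I
  have "quad_form ?N ?Q (entangle_vec d h) = (\<Sum>I<?N. cnj (entangle_vec d h I) * R I)"
    unfolding quad_form_def R_def by (simp add: sum_distrib_left mult.assoc)
  also have "\<dots> = (\<Sum>y<d. \<Sum>a<2. \<Sum>x<d. \<Sum>i<2. if y = x then
      cnj (h a i) * (\<Sum>b<2. \<Sum>j<2. (\<Sum>x'<d. ?K a x b x' i j) * h b j) else 0)"
    unfolding sum_lessThan_mult_nat[of _ d] sum_lessThan_mult_nat[of _ "2 * d"] sum_lessThan_mult_nat[of _ 2 d]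
  proof (intro sum.cong refl)
    fix y a x i :: nat assume "y \<in> {..<d}" "a \<in> {..<2}" "x \<in> {..<d}" "i \<in> {..<2}"
    then have y: "y < d" and r: "a * d + x < 2 * d" and xai: "x < d" "a < 2" "i < 2"
      by (simp_all add: mult_add_less_mult)
    show "cnj (entangle_vec d h (y * (2 * d * 2) + ((a * d + x) * 2 + i)))
        * R (y * (2 * d * 2) + ((a * d + x) * 2 + i))
      = (if y = x then cnj (h a i) * (\<Sum>b<2. \<Sum>j<2. (\<Sum>x'<d. ?K a x b x' i j) * h b j) else 0)"
      by (simp only: R_def entangle_vec_index[OF xai] kron_choi_entangle_vec_row[OF \<pi> y r \<open>i < 2\<close>]) simp
  qed
  also have "\<dots> = (\<Sum>a<2. \<Sum>x<d. \<Sum>i<2. cnj (h a i) * (\<Sum>b<2. \<Sum>j<2. (\<Sum>x'<d. ?K a x b x' i j) * h b j))"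
    by (subst sum.swap) (simp add: sum_if_zero_const)
  also have "\<dots> = (\<Sum>a<2. \<Sum>i<2. cnj (h a i) * (\<Sum>b<2. \<Sum>j<2. (\<Sum>x<d. \<Sum>x'<d. ?K a x b x' i j) * h b j))"
    by (simp add: sum_distrib_left sum_distrib_right sum.swap[of _ "{..<d}" "{..<2}"])
  also have "\<dots> = (\<Sum>a<2. \<Sum>i<2. cnj (h a i) * (\<Sum>b<2. \<Sum>j<2. P (kron (mat_unit 2 a b) \<pi>) $$ (i,j) * h b j))"
    using kron_mat_unit_image[OF P \<pi>] by simp
  finally show ?thesis .
qed

lemma kron_choi_entangle_vec_kernel:
  assumes P: "CPTP (2 * d) 2 P" and \<pi>: "psd d \<pi>"
    and zero: "quad_form (d * (2 * d * 2)) (kron \<pi> (choi (2 * d) 2 P)) (entangle_vec d h) = 0"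
    and "y < d" "r < 2 * d" "i < 2"
  shows "(\<Sum>b<2. \<Sum>j<2. (\<Sum>x<d. \<pi> $$ (y,x) * P (mat_unit (2 * d) r (b * d + x)) $$ (i,j)) * h b j) = 0"
proof -
  have "y * (2 * d * 2) + (r * 2 + i) < d * (2 * d * 2)"
    using assms(4-6) by (intro mult_add_less_mult)
  then have "(\<Sum>J<d * (2 * d * 2). kron \<pi> (choi (2 * d) 2 P) $$ (y * (2 * d * 2) + (r * 2 + i), J)
      * entangle_vec d h J) = 0"
    by (rule psd_quad_form_eq_0_imp_kernel[OF psd_kron_choi[OF P \<pi>] zero])
  then show ?thesis
    by (simp only: kron_choi_entangle_vec_row[OF psd_carrier[OF \<pi>] assms(4-6)])
qed

lemma amp_damp_program_coherence:
  assumes P: "CPTP (2 * d) 2 P" and \<pi>: "density d \<pi>"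
    and prog: "\<And>\<rho>. \<rho> \<in> carrier_mat 2 2 \<Longrightarrow> P (kron \<rho> \<pi>) = amp_damp_channel s \<rho>"
    and y: "y < d" and x': "x' < d"
  shows "(\<Sum>x<d. \<pi> $$ (y,x) * P (mat_unit (2 * d) x' (d + x)) $$ (0,1)) = of_real s * \<pi> $$ (y,x')"
proof -
  have \<pi>_psd: "psd d \<pi>"
    using \<pi> by (simp add: density_def)
  note \<pi>_carrier = psd_carrier[OF \<pi>_psd]
  let ?N = "d * (2 * d * 2)" and ?Q = "kron \<pi> (choi (2 * d) 2 P)"
  have kernel: "(\<Sum>b<2. \<Sum>j<2. (\<Sum>x<d. \<pi> $$ (y,x) * P (mat_unit (2 * d) x' (b * d + x)) $$ (i,j)) * h b j) = 0"
    if "quad_form ?N ?Q (entangle_vec d h) = 0" and "i < 2" for h i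
    using x' by (intro kron_choi_entangle_vec_kernel[OF P \<pi>_psd that(1) y _ that(2)]) simp
  have form: "quad_form ?N ?Q (entangle_vec d h)
      = (\<Sum>a<2. \<Sum>i<2. cnj (h a i) * (\<Sum>b<2. \<Sum>j<2. amp_damp_channel s (mat_unit 2 a b) $$ (i,j) * h b j))" for h
    using quad_form_kron_choi_entangle_vec[OF CPTP_linear_mat_map[OF P] \<pi>_carrier] prog by simp
  txt \<open>\<open>|01\<rangle>\<close> and \<open>s |00\<rangle> - |11\<rangle>\<close> are null vectors of the Choi matrix of the amplitude-damping channel.\<close>
  define h1 :: "nat \<Rightarrow> nat \<Rightarrow> complex" where "h1 a i = of_bool (a = 0 \<and> i = 1)" for a i
  define h2 :: "nat \<Rightarrow> nat \<Rightarrow> complex"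
    where "h2 a i = (if a = 0 \<and> i = 0 then of_real s else if a = 1 \<and> i = 1 then -1 else 0)" for a i
  have "quad_form ?N ?Q (entangle_vec d h1) = 0" "quad_form ?N ?Q (entangle_vec d h2) = 0"
    unfolding form by (simp_all add: h1_def h2_def sum_lessThan_2 amp_damp_channel_def power2_eq_square)
  from kernel[OF this(1), of 1] kernel[OF this(2), of 0]
  have populations: "(\<Sum>x<d. \<pi> $$ (y,x) * P (mat_unit (2 * d) x' x) $$ (1,1)) = 0"
    and coherences: "(\<Sum>x<d. \<pi> $$ (y,x) * P (mat_unit (2 * d) x' (d + x)) $$ (0,1))
        = of_real s * (\<Sum>x<d. \<pi> $$ (y,x) * P (mat_unit (2 * d) x' x) $$ (0,0))"
    by (simp_all add: h1_def h2_def sum_lessThan_2 sum_distrib_left sum_negf algebra_simps)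
  have "P (mat_unit (2 * d) x' x) $$ (0,0) = of_bool (x' = x) - P (mat_unit (2 * d) x' x) $$ (1,1)" for x
  proof -
    have "P (mat_unit (2 * d) x' x) \<in> carrier_mat 2 2"
      by (rule linear_mat_mapD(1)[OF CPTP_linear_mat_map[OF P]]) simp
    then show ?thesis
      using mtrace_CPTP_mat_unit[OF P, of x' x] x' by (simp add: mtrace_def sum_lessThan_2 eq_diff_eq)
  qed
  then show ?thesis
    using coherences populations x' by (simp add: right_diff_distrib sum_subtractf)
qed

text \<open>In the basis ordering of \<^const>\<open>kron\<close>, \<open>mat_unit (2 * d) x' (d + x)\<close> is \<open>|0\<rangle>\<langle>1| \<otimes> |x'\<rangle>\<langle>x|\<close>.\<close>

definition coherence_mat :: "nat \<Rightarrow> (complex mat \<Rightarrow> complex mat) \<Rightarrow> complex mat" where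
  "coherence_mat d P = mat d d (\<lambda>(x',x). P (mat_unit (2 * d) x' (d + x)) $$ (0,1))"

lemma amp_damp_program_eigenvalue:
  assumes P: "CPTP (2 * d) 2 P" and \<pi>: "density d \<pi>"
    and prog: "\<And>\<rho>. \<rho> \<in> carrier_mat 2 2 \<Longrightarrow> P (kron \<rho> \<pi>) = amp_damp_channel s \<rho>"
  shows "eigenvalue (coherence_mat d P) (of_real s)"
proof -
  have "(\<Sum>y<d. \<pi> $$ (y,y)) = 1"
    using \<pi> density_carrier[OF \<pi>] by (simp add: density_def mtrace_def)
  then have "\<exists>y<d. \<pi> $$ (y,y) \<noteq> 0"
    by (metis (no_types, lifting) lessThan_iff sum.neutral zero_neq_one)
  then obtain y where y: "y < d" "\<pi> $$ (y,y) \<noteq> 0"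
    by blast
  define v where "v = vec d (\<lambda>x. \<pi> $$ (y,x))"
  have "v \<noteq> 0\<^sub>v d"
  proof
    assume "v = 0\<^sub>v d"
    then have "v $ y = 0"
      using y by simp
    then show False
      using y by (simp add: v_def)
  qed
  moreover have "coherence_mat d P *\<^sub>v v = of_real s \<cdot>\<^sub>v v"
  proof (rule eq_vecI)
    fix x' assume "x' < dim_vec (of_real s \<cdot>\<^sub>v v)"
    then have "x' < d"
      by (simp add: v_def)
    then show "(coherence_mat d P *\<^sub>v v) $ x' = (of_real s \<cdot>\<^sub>v v) $ x'"
      using amp_damp_program_coherence[OF P \<pi> prog y(1)]
      by (simp add: coherence_mat_def v_def scalar_prod_def atLeast0LessThan mult.commute)
  qed (simp add: coherence_mat_def v_def)
  moreover have "v \<in> carrier_vec d" "dim_row (coherence_mat d P) = d"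
    by (simp_all add: coherence_mat_def v_def)
  ultimately show ?thesis
    unfolding eigenvalue_def eigenvector_def by auto
qed

lemma amp_damp_semigroup_program_eigenvalue:
  assumes "\<gamma> \<ge> 0" and P: "CPTP (2 * d) 2 P" and \<pi>: "density d \<pi>"
    and prog: "\<And>\<rho>. density 2 \<rho> \<Longrightarrow> P (kron \<rho> \<pi>) = amp_damp_semigroup \<gamma> t \<rho>"
  shows "eigenvalue (coherence_mat d P) (of_real (exp (- \<gamma> * t / 2)))"
proof (rule amp_damp_program_eigenvalue[OF P \<pi>])
  fix \<rho> :: "complex mat" assume "\<rho> \<in> carrier_mat 2 2"
  then show "P (kron \<rho> \<pi>) = amp_damp_channel (exp (- \<gamma> * t / 2)) \<rho>"
  proof (rule linear_mat_map_eq_on_qubit_densities[rotated 3])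
    show "linear_mat_map 2 2 (\<lambda>\<rho>. P (kron \<rho> \<pi>))"
      using linear_mat_map_kron_right[OF CPTP_linear_mat_map[OF P] density_carrier[OF \<pi>]] by simp
    show "\<And>\<sigma>. density 2 \<sigma> \<Longrightarrow> P (kron \<sigma> \<pi>) = amp_damp_channel (exp (- \<gamma> * t / 2)) \<sigma>"
      using prog amp_damp_semigroup_eq_channel[OF \<open>\<gamma> \<ge> 0\<close> density_carrier] by simp
  qed (rule linear_amp_damp_channel)
qed

lemma finite_eigenvalues:
  fixes A :: "'a::field mat"
  assumes "A \<in> carrier_mat n n"
  shows "finite {k. eigenvalue A k}"
proof -
  have "char_poly A \<noteq> 0"
    using degree_monic_char_poly[OF assms] by auto
  then show ?thesis
    using poly_roots_finite eigenvalue_root_char_poly[OF assms] by simp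
qed

theorem proposition2:
  fixes \<gamma> :: real
  assumes "\<gamma> > 0"
  shows "\<not> quantum_programmable (amp_damp_semigroup \<gamma>)"
proof
  assume "quantum_programmable (amp_damp_semigroup \<gamma>)"
  then obtain d P \<pi> where P: "CPTP (2 * d) 2 P" and \<pi>: "\<forall>t\<ge>0. density d (\<pi> t)"
    and prog: "\<forall>t\<ge>0. \<forall>\<rho>. density 2 \<rho> \<longrightarrow> P (kron \<rho> (\<pi> t)) = amp_damp_semigroup \<gamma> t \<rho>"
    unfolding quantum_programmable_def by blast
  let ?s = "\<lambda>t. complex_of_real (exp (- \<gamma> * t / 2))"
  have "?s ` {0..} \<subseteq> {k. eigenvalue (coherence_mat d P) k}"
    using amp_damp_semigroup_program_eigenvalue[OF _ P] assms \<pi> prog by auto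
  moreover have "finite {k. eigenvalue (coherence_mat d P) k}"
    by (rule finite_eigenvalues[of _ d]) (simp add: coherence_mat_def)
  moreover have "inj_on ?s {0..}"
    using assms by (auto intro!: inj_onI)
  ultimately show False
    by (metis finite_imageD finite_subset infinite_Ici)
qed

end
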